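(* Suppose $h$ satisfies: there are $\alpha_h\in(0,2]$, $C_h\ge1$, $\theta_h\in(0,\infty]$ with $h(r)\le C_h\lambda^{\alpha_h}h(\lambda r)$ for all $\lambda\le1$, $r<\theta_h$. Let $\mathfrak h:(0,\infty)\to(0,\infty)$ be non-increasing with $\lambda^{\alpha_{\mathfrak h}}\mathfrak h(\lambda t)\le c_{\mathfrak h}\mathfrak h(t)$ for all $\lambda\le1$, $t<\theta_{\mathfrak h}$, for some $\alpha_{\mathfrak h}\le1$, $c_{\mathfrak h}\ge1$, $\theta_{\mathfrak h}\in(0,\infty]$. Then there is $c$ depending only on $d,\alpha_h,C_h,\alpha_{\mathfrak h},c_{\mathfrak h}$ such that for all $s,t>0$ with $s+t<(1/h(\theta_h))\wedge\theta_{\mathfrak h}$ and all $x,y\in\mathbb{R}^d$, $\mathfrak h(s)\rho_s(x)\wedge\mathfrak h(t)\rho_t(y)\le c\,\mathfrak h(s+t)\rho_{s+t}(x+y)$. In particular (taking $\mathfrak h\equiv1$), there is $c=c(d,\alpha_h,C_h)$ with $\rho_s(x)\wedge\rho_t(y)\le c\,\rho_{s+t}(x+y)$ for $s+t<1/h(\theta_h)$.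
   Context: Let $d\in\mathbb{N}$ and let $\nu:[0,\infty)\to[0,\infty]$ be non-increasing with $\int_{\mathbb{R}^d}(1\wedge|x|^2)\nu(|x|)\,dx<\infty$. For $r>0$ let $h(r)=\int_{\mathbb{R}^d}\big(1\wedge \tfrac{|x|^2}{r^2}\big)\nu(|x|)\,dx$ and $K(r)=r^{-2}\int_{|x|<r}|x|^2\nu(|x|)\,dx$; assume $h(0^+)=\infty$, so $h$ is a continuous strictly decreasing bijection of $(0,\infty)$ onto $(0,\infty)$ with inverse $h^{-1}$; $1/h(\infty):=\infty$. Bound function: $\rho_t(x)=[h^{-1}(1/t)]^{-d}\wedge \frac{tK(|x|)}{|x|^d}$ for $t>0$, $x\in\mathbb{R}^d$. *)

theory Defs
  imports "HOL-Analysis.Analysis"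
begin

text \<open>The dimension d is DIM('a) for the Euclidean space 'a; the type is passed via itself.
  The radial density nu takes values in [0,\<infinity>] (ennreal).\<close>

definition hfun :: "'a::euclidean_space itself \<Rightarrow> (real \<Rightarrow> ennreal) \<Rightarrow> real \<Rightarrow> real" where
  "hfun T \<nu> r = enn2real (\<integral>\<^sup>+ x. ennreal (min 1 (norm x ^ 2 / r ^ 2)) * \<nu> (norm x) \<partial>(lborel :: 'a measure))"

definition Kfun :: "'a::euclidean_space itself \<Rightarrow> (real \<Rightarrow> ennreal) \<Rightarrow> real \<Rightarrow> real" where
  "Kfun T \<nu> r = enn2real (\<integral>\<^sup>+ x. indicator {x. norm x < r} x * ennreal (norm x ^ 2) * \<nu> (norm x)
      \<partial>(lborel :: 'a measure)) / r ^ 2"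

text \<open>Inverse of the bijection h : (0,\<infinity>) \<rightarrow> (0,\<infinity>).\<close>
definition hinv :: "'a::euclidean_space itself \<Rightarrow> (real \<Rightarrow> ennreal) \<Rightarrow> real \<Rightarrow> real" where
  "hinv T \<nu> u = (THE r. 0 < r \<and> hfun T \<nu> r = u)"

text \<open>Bound function rho_t(x); at x = 0 the second term t K(|x|)/|x|^d is read as +\<infinity>.\<close>
definition rho :: "(real \<Rightarrow> ennreal) \<Rightarrow> real \<Rightarrow> 'a::euclidean_space \<Rightarrow> real" where
  "rho \<nu> t x =
     (if x = 0 then inverse (hinv TYPE('a) \<nu> (1 / t) ^ DIM('a))
      else min (inverse (hinv TYPE('a) \<nu> (1 / t) ^ DIM('a)))
               (t * Kfun TYPE('a) \<nu> (norm x) / norm x ^ DIM('a)))"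

definition inv_h_at :: "'a::euclidean_space itself \<Rightarrow> (real \<Rightarrow> ennreal) \<Rightarrow> ereal \<Rightarrow> ereal" where
  "inv_h_at T \<nu> \<theta> = (if \<theta> = \<infinity> then \<infinity> else ereal (1 / hfun T \<nu> (real_of_ereal \<theta>)))"

definition admissible_nu :: "'a::euclidean_space itself \<Rightarrow> (real \<Rightarrow> ennreal) \<Rightarrow> bool" where
  "admissible_nu T \<nu> \<longleftrightarrow>
     (\<forall>a b. 0 \<le> a \<longrightarrow> a \<le> b \<longrightarrow> \<nu> b \<le> \<nu> a) \<and>
     (\<integral>\<^sup>+ x. ennreal (min 1 (norm x ^ 2)) * \<nu> (norm x) \<partial>(lborel :: 'a measure)) < \<infinity> \<and>
     filterlim (hfun T \<nu>) at_top (at_right 0)"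

end

(*
  For t <= s we have h(h^{-1}(1/s)) = 1/s <= 2/(s+t),
  and the lower scaling of h turns this factor 2 into h^{-1}(1/(s+t)) <= (4 C_h)^{1/alpha_h} h^{-1}(1/s);
  the scaling of the weight gives s g(s) <= c (s+t) g(s+t), hence g(s) <= 2c g(s+t).
  For the off-diagonal part, one of |x|, |y| is at least |x+y|/2, while K(r)/r^d is non-increasing and
  r^2 K(r) is non-decreasing, so K(|z|)/|z|^d <= 2^(d+2) K(|x+y|)/|x+y|^d; again u g(u) <= c (s+t) g(s+t).
  Behind h^{-1} lies the fact that h is a continuous strictly decreasing bijection of (0,oo):
  as a function of q = 1/r it is continuous on [0,oo) by dominated convergence, vanishes at q = 0,
  and is strictly increasing because nu does not vanish near 0.
*)
theory Submission
  imports Defs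
begin

lemma borel_measurable_radial_antimono:
  fixes \<nu> :: "real \<Rightarrow> ennreal"
  assumes antimono: "\<And>a b. 0 \<le> a \<Longrightarrow> a \<le> b \<Longrightarrow> \<nu> b \<le> \<nu> a"
  shows "(\<lambda>x::'a::euclidean_space. \<nu> (norm x)) \<in> borel_measurable borel"
proof (rule borel_measurableI_greater)
  fix y
  let ?S = "{r::real. 0 \<le> r \<and> y < \<nu> r}"
  have "is_interval ?S"
    unfolding is_interval_1 by (fastforce intro: order_less_le_trans antimono)
  then have "norm -` ?S \<inter> space borel \<in> sets (borel :: 'a measure)"
    by (intro measurable_sets[OF borel_measurable_norm] real_interval_borel_measurable)
  moreover have "{x \<in> space borel. y < \<nu> (norm x)} = norm -` ?S \<inter> space borel" by auto
  ultimately show "{x \<in> space borel. y < \<nu> (norm (x::'a))} \<in> sets borel" by simp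
qed

lemma nn_integral_scale:
  fixes f :: "'a::euclidean_space \<Rightarrow> ennreal"
  assumes [measurable]: "f \<in> borel_measurable borel" and c: "0 < c"
  shows "(\<integral>\<^sup>+x. f x \<partial>lborel) = ennreal (c ^ DIM('a)) * (\<integral>\<^sup>+x. f (c *\<^sub>R x) \<partial>lborel)"
proof -
  have "(\<integral>\<^sup>+x. f x \<partial>lborel) =
      (\<integral>\<^sup>+x. f x \<partial>(density (distr lborel borel (\<lambda>x. 0 + c *\<^sub>R x)) (\<lambda>_. \<bar>c\<bar>^DIM('a))))"
    using lborel_affine[where 'a='a, of c 0] c by simp
  also have "\<dots> = ennreal (c ^ DIM('a)) * (\<integral>\<^sup>+x. f (c *\<^sub>R x) \<partial>lborel)"
    using c by (simp add: nn_integral_density nn_integral_distr nn_integral_cmult)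
  finally show ?thesis .
qed

lemma emeasure_punctured_ball_pos:
  assumes "0 < r"
  shows "0 < emeasure lborel (ball (0::'a::euclidean_space) r - {0})"
proof -
  have "{0::'a} \<in> null_sets lborel" by (rule finite_imp_null_set_lborel) simp
  then have "emeasure lborel (ball (0::'a) r - {0}) = emeasure lborel (ball (0::'a) r)"
    by (intro emeasure_Diff_null_set) auto
  then show ?thesis using assms by (simp add: emeasure_ball)
qed

lemma min_one_power2_mult_le:
  fixes n q Q :: real
  assumes "0 \<le> n" "0 \<le> q" "q \<le> Q"
  shows "min 1 ((n * q)^2) \<le> max 1 (Q^2) * min 1 (n^2)"
proof (cases "n \<le> 1")
  case True
  have "min 1 ((n * q)^2) \<le> q^2 * n^2" by (simp add: power_mult_distrib mult.commute)
  also have "\<dots> \<le> max 1 (Q^2) * n^2"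
    using assms by (intro mult_right_mono max.coboundedI2 power_mono) auto
  also have "n^2 = min 1 (n^2)" using True assms by (simp add: power_le_one)
  finally show ?thesis .
next
  case False
  then have "min 1 (n^2) = 1" using one_le_power[of n 2] by simp
  then show ?thesis by (simp add: min.coboundedI1 max.coboundedI1)
qed

lemma indicator_less_mult_power2_le:
  fixes n r :: real
  assumes "0 \<le> n" "0 < r"
  shows "indicator {x. x < r} n * n^2 \<le> max 1 (r^2) * min 1 (n^2)"
proof (cases "n \<le> 1")
  case True
  then have "n^2 \<le> max 1 (r^2) * n^2" by (simp add: mult_le_cancel_right1)
  then show ?thesis using True assms by (simp add: indicator_def power_le_one)
next
  case False
  then have "min 1 (n^2) = 1" using one_le_power[of n 2] by simp
  moreover have "indicator {x. x < r} n * n^2 \<le> r^2"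
    using assms by (auto simp: indicator_def intro!: power_mono)
  ultimately show ?thesis by simp
qed

text \<open>\<open>hfun T \<nu> r = enn2real (h_integral T \<nu> (1 / r))\<close>; unlike \<open>hfun\<close>, the integral is
  also meaningful at \<open>q = 0\<close>, i.e. at \<open>r = \<infinity>\<close>.\<close>
definition h_integral :: "'a::euclidean_space itself \<Rightarrow> (real \<Rightarrow> ennreal) \<Rightarrow> real \<Rightarrow> ennreal" where
  "h_integral T \<nu> q = (\<integral>\<^sup>+ x. ennreal (min 1 ((norm x * q) ^ 2)) * \<nu> (norm x) \<partial>(lborel :: 'a measure))"

lemma hfun_nonneg: "0 \<le> hfun T \<nu> r"
  by (simp add: hfun_def)

definition ball_second_moment :: "'a::euclidean_space itself \<Rightarrow> (real \<Rightarrow> ennreal) \<Rightarrow> real \<Rightarrow> ennreal" where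
  "ball_second_moment T \<nu> r =
     (\<integral>\<^sup>+ x. indicator {x. norm x < r} x * ennreal (norm x ^ 2) * \<nu> (norm x) \<partial>(lborel :: 'a measure))"

lemma Kfun_nonneg: "0 \<le> Kfun T \<nu> r"
  by (simp add: Kfun_def)

lemma Kfun_eq: "Kfun T \<nu> r = enn2real (ball_second_moment T \<nu> r) / r ^ 2"
  unfolding Kfun_def ball_second_moment_def ..

lemma ball_second_moment_mono:
  "r1 \<le> r2 \<Longrightarrow> ball_second_moment T \<nu> r1 \<le> ball_second_moment T \<nu> r2"
  unfolding ball_second_moment_def
  by (intro nn_integral_mono mult_right_mono) (auto simp: indicator_def)

definition hfun_scaling :: "'a::euclidean_space itself \<Rightarrow> (real \<Rightarrow> ennreal) \<Rightarrow> real \<Rightarrow> real \<Rightarrow> ereal \<Rightarrow> bool" where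
  "hfun_scaling T \<nu> \<alpha> C \<theta> \<longleftrightarrow>
     (\<forall>l r. 0 < l \<and> l \<le> 1 \<and> 0 < r \<and> ereal r < \<theta> \<longrightarrow> hfun T \<nu> r \<le> C * l powr \<alpha> * hfun T \<nu> (l * r))"

definition weight_scaling :: "(real \<Rightarrow> real) \<Rightarrow> real \<Rightarrow> real \<Rightarrow> ereal \<Rightarrow> bool" where
  "weight_scaling g \<alpha> c \<theta> \<longleftrightarrow>
     (\<forall>l t. 0 < l \<and> l \<le> 1 \<and> 0 < t \<and> ereal t < \<theta> \<longrightarrow> l powr \<alpha> * g (l * t) \<le> c * g t)"

lemma weight_scaling_mult_le:
  assumes "weight_scaling g \<alpha> c \<theta>" "\<alpha> \<le> 1" "0 \<le> g u" "0 < u" "u \<le> T" "ereal T < \<theta>"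
  shows "u * g u \<le> c * T * g T"
proof -
  define l where "l = u / T"
  have T: "0 < T" using assms by simp
  have l: "0 < l" "l \<le> 1" and u: "u = l * T" using assms unfolding l_def by auto
  have "l * g u \<le> l powr \<alpha> * g u"
    using l assms powr_mono'[of \<alpha> 1 l] by (intro mult_right_mono) auto
  also have "\<dots> \<le> c * g T"
    unfolding u by (rule assms(1)[unfolded weight_scaling_def, rule_format]) (use l T assms(6) in auto)
  finally have "T * (l * g u) \<le> T * (c * g T)" by (rule mult_left_mono) (use T in simp)
  then show ?thesis by (simp add: u mult_ac)
qed

definition rho_min_const :: "'a::euclidean_space itself \<Rightarrow> real \<Rightarrow> real \<Rightarrow> real \<Rightarrow> real" where
  "rho_min_const T \<alpha>h Ch cg = cg * max (2 * ((4 * Ch) powr (1 / \<alpha>h)) ^ DIM('a)) (2 ^ (DIM('a) + 2))"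

context
  fixes \<nu> :: "real \<Rightarrow> ennreal"
  assumes adm: "admissible_nu TYPE('a::euclidean_space) \<nu>"
begin

lemma nu_antimono: "0 \<le> a \<Longrightarrow> a \<le> b \<Longrightarrow> \<nu> b \<le> \<nu> a"
  using adm unfolding admissible_nu_def by blast

lemma measurable_nu_norm [measurable]: "(\<lambda>x::'a. \<nu> (norm x)) \<in> borel_measurable borel"
  by (rule borel_measurable_radial_antimono) (rule nu_antimono)

lemma nn_integral_radial_less_top:
  assumes "\<And>x::'a. f x \<le> c * min 1 (norm x ^ 2)" "0 \<le> c"
  shows "(\<integral>\<^sup>+ x. ennreal (f x) * \<nu> (norm x) \<partial>(lborel :: 'a measure)) < \<infinity>"
proof -
  have "(\<integral>\<^sup>+ x. ennreal (f x) * \<nu> (norm x) \<partial>lborel)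
      \<le> (\<integral>\<^sup>+ x. ennreal c * (ennreal (min 1 (norm x ^ 2)) * \<nu> (norm x)) \<partial>(lborel :: 'a measure))"
    using assms by (intro nn_integral_mono)
      (simp add: mult.assoc[symmetric] ennreal_mult[symmetric] mult_right_mono ennreal_leI)
  also have "\<dots> = ennreal c * (\<integral>\<^sup>+ x. ennreal (min 1 (norm x ^ 2)) * \<nu> (norm x) \<partial>(lborel :: 'a measure))"
    by (simp add: nn_integral_cmult)
  also have "\<dots> < \<infinity>"
    using adm unfolding admissible_nu_def by (simp add: ennreal_mult_less_top)
  finally show ?thesis .
qed

lemma nu_less_top:
  assumes "0 < r"
  shows "\<nu> r < \<infinity>"
proof (rule ccontr)
  assume "\<not> \<nu> r < \<infinity>"
  then have inf: "\<nu> (norm x) = \<infinity>" if "norm x < r" for x :: 'a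
    using nu_antimono[of "norm x" r] that by (simp add: less_top[symmetric] top_unique)
  let ?B = "ball (0::'a) r - {0}"
  have "\<infinity> * emeasure lborel ?B = \<infinity>"
    using emeasure_punctured_ball_pos[OF assms, where 'a='a] by (simp add: ennreal_top_mult)
  then have "\<infinity> = (\<integral>\<^sup>+ x. \<infinity> * indicator ?B x \<partial>(lborel :: 'a measure))"
    by (simp add: nn_integral_cmult_indicator)
  also have "\<dots> \<le> (\<integral>\<^sup>+ x. ennreal (min 1 (norm x ^ 2)) * \<nu> (norm x) \<partial>(lborel :: 'a measure))"
    by (intro nn_integral_mono) (auto simp: indicator_def inf ennreal_mult_top min_def)
  also have "\<dots> < \<infinity>"
    by (rule nn_integral_radial_less_top[of _ 1]) auto
  finally show False by simp
qed

lemma nu_pos: "\<exists>\<delta>>0. 0 < \<nu> \<delta>"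
proof (rule ccontr)
  assume "\<not> ?thesis"
  then have "\<nu> r = 0" if "0 < r" for r using that by (meson leD not_gr_zero)
  then have "(\<lambda>x::'a. ennreal (min 1 (norm x ^ 2 / r ^ 2)) * \<nu> (norm x)) = (\<lambda>_. 0)" for r
    by (intro ext, case_tac "x = 0") auto
  then have "hfun TYPE('a) \<nu> r = 0" for r by (simp add: hfun_def)
  moreover have "filterlim (hfun TYPE('a) \<nu>) at_top (at_right 0)"
    using adm unfolding admissible_nu_def by blast
  then have "\<forall>\<^sub>F r in at_right 0. 1 \<le> hfun TYPE('a) \<nu> r"
    by (simp add: filterlim_at_top)
  ultimately show False
    by (simp add: trivial_limit_at_right_real)
qed

subsection \<open>The function h and its inverse\<close>

lemma h_integral_less_top: "0 \<le> q \<Longrightarrow> h_integral TYPE('a) \<nu> q < \<infinity>"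
  unfolding h_integral_def
  by (rule nn_integral_radial_less_top[of _ "max 1 (q^2)"]) (auto intro: min_one_power2_mult_le)

lemma ennreal_hfun: "0 < r \<Longrightarrow> ennreal (hfun TYPE('a) \<nu> r) = h_integral TYPE('a) \<nu> (inverse r)"
  using h_integral_less_top[of "inverse r"]
  by (simp add: hfun_def h_integral_def power_mult_distrib divide_inverse power_inverse less_top)

lemma h_integral_strict_mono:
  assumes pq: "0 \<le> p" "p < q"
  shows "h_integral TYPE('a) \<nu> p < h_integral TYPE('a) \<nu> q"
proof -
  define f where "f q x = ennreal (min 1 ((norm x * q) ^ 2)) * \<nu> (norm x)" for q and x :: 'a
  have [measurable]: "f q \<in> borel_measurable lborel" for q unfolding f_def by measurable
  obtain \<delta> where \<delta>: "0 < \<delta>" "0 < \<nu> \<delta>" using nu_pos by blast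
  define B where "B = ball (0::'a) (min \<delta> (1 / q)) - {0}"
  have "f p x < f q x" if "x \<in> B" for x
  proof -
    have n: "0 < norm x" "norm x \<le> \<delta>" "norm x * q < 1"
      using that pq by (auto simp: B_def field_simps)
    have "0 < \<nu> (norm x)" using nu_antimono[of "norm x" \<delta>] n \<delta> by simp
    then obtain w where w: "\<nu> (norm x) = ennreal w" "0 < w"
      using nu_less_top[OF n(1)] by (cases "\<nu> (norm x)") auto
    have "(norm x * p) ^ 2 < (norm x * q) ^ 2"
      using n pq by (intro power_strict_mono mult_strict_left_mono) auto
    moreover have "(norm x * q) ^ 2 < 1" using n pq by (simp add: power_less_one_iff)
    ultimately show ?thesis
      using w by (simp add: f_def ennreal_mult''[symmetric] ennreal_less_iff)
  qed
  moreover have "0 < emeasure lborel B"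
    unfolding B_def using \<delta> pq by (intro emeasure_punctured_ball_pos) auto
  ultimately have "\<not> (AE x in lborel. f q x \<le> f p x)"
  proof (intro notI)
    assume "AE x in lborel. f q x \<le> f p x"
    then have "AE x in lborel. x \<notin> B"
      by eventually_elim (use \<open>\<And>x. x \<in> B \<Longrightarrow> f p x < f q x\<close> in force)
    then have "B \<in> null_sets lborel" by (subst AE_iff_null_sets) (auto simp: B_def)
    then show False using \<open>0 < emeasure lborel B\<close> by (simp add: null_setsD1)
  qed
  moreover have "f p x \<le> f q x" for x
    unfolding f_def using pq
    by (intro mult_right_mono ennreal_leI min.mono power_mono mult_left_mono) auto
  ultimately show ?thesis
    using h_integral_less_top[of p] pq unfolding h_integral_def f_def[symmetric]
    by (intro nn_integral_less) auto
qed

lemma tendsto_h_integral: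
  assumes q: "\<And>n. 0 \<le> q n" "\<And>n. q n \<le> Q" "q \<longlonglongrightarrow> q0"
  shows "(\<lambda>n. h_integral TYPE('a) \<nu> (q n)) \<longlonglongrightarrow> h_integral TYPE('a) \<nu> q0"
  unfolding h_integral_def
proof (rule nn_integral_dominated_convergence
    [where w = "\<lambda>x. ennreal (max 1 (Q^2) * min 1 (norm x ^ 2)) * \<nu> (norm x)"])
  show "AE x in lborel. ennreal (min 1 ((norm (x::'a) * q n) ^ 2)) * \<nu> (norm x)
      \<le> ennreal (max 1 (Q^2) * min 1 (norm x ^ 2)) * \<nu> (norm x)" for n
    using q by (intro AE_I2 mult_right_mono ennreal_leI min_one_power2_mult_le) auto
  show "(\<integral>\<^sup>+ x. ennreal (max 1 (Q^2) * min 1 (norm x ^ 2)) * \<nu> (norm x) \<partial>(lborel :: 'a measure)) < \<infinity>"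
    by (rule nn_integral_radial_less_top) auto
  show "AE x in (lborel :: 'a measure). (\<lambda>n. ennreal (min 1 ((norm x * q n) ^ 2)) * \<nu> (norm x))
      \<longlonglongrightarrow> ennreal (min 1 ((norm x * q0) ^ 2)) * \<nu> (norm x)"
  proof (rule AE_I2)
    fix x :: 'a
    show "(\<lambda>n. ennreal (min 1 ((norm x * q n) ^ 2)) * \<nu> (norm x))
      \<longlonglongrightarrow> ennreal (min 1 ((norm x * q0) ^ 2)) * \<nu> (norm x)"
    proof (cases "x = 0")
      case False
      then obtain w where w: "\<nu> (norm x) = ennreal w" "0 \<le> w"
        using nu_less_top[of "norm x"] by (cases "\<nu> (norm x)") auto
      have "(\<lambda>n. ennreal (min 1 ((norm x * q n) ^ 2) * w)) \<longlonglongrightarrow> ennreal (min 1 ((norm x * q0) ^ 2) * w)"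
        by (intro tendsto_ennrealI tendsto_intros q(3))
      then show ?thesis using w by (simp add: ennreal_mult'')
    qed simp
  qed
qed measurable

lemma hfun_strict_antimono: "0 < a \<Longrightarrow> a < b \<Longrightarrow> hfun TYPE('a) \<nu> b < hfun TYPE('a) \<nu> a"
  using h_integral_strict_mono[of "inverse b" "inverse a"]
  by (simp add: ennreal_hfun[symmetric] ennreal_less_iff hfun_nonneg)

lemma hfun_antimono: "0 < a \<Longrightarrow> a \<le> b \<Longrightarrow> hfun TYPE('a) \<nu> b \<le> hfun TYPE('a) \<nu> a"
  using hfun_strict_antimono[of a b] by (cases "a = b") auto

lemma hfun_pos: "0 < r \<Longrightarrow> 0 < hfun TYPE('a) \<nu> r"
  using hfun_strict_antimono[of r "2 * r"] hfun_nonneg[of "TYPE('a)" \<nu> "2 * r"] by simp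

lemma continuous_on_hfun:
  assumes "0 < a"
  shows "continuous_on {a..b} (hfun TYPE('a) \<nu>)"
proof (rule continuous_on_sequentiallyI)
  fix u :: "nat \<Rightarrow> real" and r
  assume u: "\<forall>n. u n \<in> {a..b}" "u \<longlonglongrightarrow> r" and r: "r \<in> {a..b}"
  have "a \<le> u n" for n using u by simp
  then have "0 < u n" for n using assms by (meson less_le_trans)
  have "(\<lambda>n. h_integral TYPE('a) \<nu> (inverse (u n))) \<longlonglongrightarrow> h_integral TYPE('a) \<nu> (inverse r)"
    using \<open>\<And>n. a \<le> u n\<close> u r assms
    by (intro tendsto_h_integral[where Q = "inverse a"] tendsto_inverse le_imp_inverse_le)
      (auto intro: order.trans[OF less_imp_le])
  then have "(\<lambda>n. ennreal (hfun TYPE('a) \<nu> (u n))) \<longlonglongrightarrow> ennreal (hfun TYPE('a) \<nu> r)"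
    using \<open>\<And>n. 0 < u n\<close> r assms by (simp add: ennreal_hfun)
  then show "(\<lambda>n. hfun TYPE('a) \<nu> (u n)) \<longlonglongrightarrow> hfun TYPE('a) \<nu> r"
    by (rule tendsto_ennrealD) (simp_all add: hfun_nonneg)
qed

lemma hfun_small:
  assumes "0 < u"
  shows "\<exists>R>0. hfun TYPE('a) \<nu> R \<le> u"
proof -
  have "(\<lambda>n. h_integral TYPE('a) \<nu> (inverse (Suc n))) \<longlonglongrightarrow> h_integral TYPE('a) \<nu> 0"
    by (intro tendsto_h_integral[where Q = 1] LIMSEQ_inverse_real_of_nat) (auto simp: field_simps)
  then have "(\<lambda>n. ennreal (hfun TYPE('a) \<nu> (Suc n))) \<longlonglongrightarrow> 0"
    by (simp add: ennreal_hfun h_integral_def)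
  then have "\<forall>\<^sub>F n in sequentially. ennreal (hfun TYPE('a) \<nu> (Suc n)) < ennreal u"
    using assms by (intro order_tendstoD(2)) auto
  then obtain n where "ennreal (hfun TYPE('a) \<nu> (Suc n)) < ennreal u"
    by (meson eventually_sequentially order_refl)
  then have "hfun TYPE('a) \<nu> (Suc n) < u" by (simp add: ennreal_less_iff hfun_nonneg)
  then show ?thesis by (intro exI[of _ "real (Suc n)"]) auto
qed

lemma hfun_large:
  assumes "0 < R"
  shows "\<exists>r>0. r < R \<and> u \<le> hfun TYPE('a) \<nu> r"
proof -
  have "filterlim (hfun TYPE('a) \<nu>) at_top (at_right 0)"
    using adm unfolding admissible_nu_def by blast
  then obtain b where "0 < b" "\<forall>r>0. r < b \<longrightarrow> u \<le> hfun TYPE('a) \<nu> r"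
    by (auto simp: filterlim_at_top eventually_at_right_field)
  then show ?thesis using assms by (intro exI[of _ "min (b / 2) (R / 2)"]) auto
qed

lemma hinv_eq:
  assumes "0 < r"
  shows "hinv TYPE('a) \<nu> (hfun TYPE('a) \<nu> r) = r"
  unfolding hinv_def
proof (rule the_equality)
  show "r' = r" if "0 < r' \<and> hfun TYPE('a) \<nu> r' = hfun TYPE('a) \<nu> r" for r'
    using that assms hfun_strict_antimono[of r r'] hfun_strict_antimono[of r' r]
    by (cases r r' rule: linorder_cases) auto
qed (use assms in simp)

lemma hfun_surj:
  assumes "0 < u"
  shows "\<exists>r>0. hfun TYPE('a) \<nu> r = u"
proof -
  obtain R where R: "0 < R" "hfun TYPE('a) \<nu> R \<le> u" using hfun_small[OF assms] by blast
  obtain r0 where r0: "0 < r0" "r0 < R" "u \<le> hfun TYPE('a) \<nu> r0" using hfun_large[OF R(1)] by blast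
  then obtain r where "r0 \<le> r" "hfun TYPE('a) \<nu> r = u"
    using IVT2'[OF R(2) r0(3) _ continuous_on_hfun[OF r0(1)]] by auto
  then show ?thesis using r0(1) by (intro exI[of _ r]) auto
qed

lemma hinv_pos: "0 < u \<Longrightarrow> 0 < hinv TYPE('a) \<nu> u"
  using hfun_surj hinv_eq by metis

lemma hfun_hinv: "0 < u \<Longrightarrow> hfun TYPE('a) \<nu> (hinv TYPE('a) \<nu> u) = u"
  using hfun_surj hinv_eq by metis

lemma hinv_less_theta:
  assumes "0 < \<theta>" "0 < \<tau>" "ereal \<tau> < inv_h_at TYPE('a) \<nu> \<theta>"
  shows "ereal (hinv TYPE('a) \<nu> (1 / \<tau>)) < \<theta>"
proof (cases \<theta>)
  case (real \<theta>')
  with assms have \<theta>': "0 < \<theta>'" "\<tau> < 1 / hfun TYPE('a) \<nu> \<theta>'" by (auto simp: inv_h_at_def)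
  then have "hfun TYPE('a) \<nu> \<theta>' < 1 / \<tau>"
    using hfun_pos[OF \<theta>'(1)] assms(2) by (simp add: less_divide_eq mult.commute)
  also have "\<dots> = hfun TYPE('a) \<nu> (hinv TYPE('a) \<nu> (1 / \<tau>))"
    using assms(2) by (simp add: hfun_hinv)
  finally have "hinv TYPE('a) \<nu> (1 / \<tau>) < \<theta>'"
    using hfun_antimono[OF \<theta>'(1), of "hinv TYPE('a) \<nu> (1 / \<tau>)"] by (meson not_le)
  then show ?thesis using real by simp
qed (use assms in auto)

lemma hfun_scaling_radius_le:
  assumes sc: "hfun_scaling TYPE('a) \<nu> \<alpha> C \<theta>" and \<alpha>: "0 < \<alpha>" and C: "1 \<le> C"
    and r: "0 < r" "ereal r < \<theta>" and r': "0 < r'" "hfun TYPE('a) \<nu> r' \<le> 2 * hfun TYPE('a) \<nu> r"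
  shows "r \<le> (4 * C) powr (1 / \<alpha>) * r'"
proof (rule ccontr)
  define \<Lambda> where "\<Lambda> = (4 * C) powr (1 / \<alpha>)"
  assume "\<not> r \<le> \<Lambda> * r'"
  have \<Lambda>: "1 \<le> \<Lambda>" unfolding \<Lambda>_def using C \<alpha> by (intro ge_one_powr_ge_zero) auto
  have "inverse \<Lambda> powr \<alpha> = inverse (4 * C)"
    unfolding \<Lambda>_def using C \<alpha> by (simp add: inverse_powr powr_powr)
  have "hfun TYPE('a) \<nu> r \<le> C * inverse \<Lambda> powr \<alpha> * hfun TYPE('a) \<nu> (inverse \<Lambda> * r)"
    by (rule sc[unfolded hfun_scaling_def, rule_format]) (use \<Lambda> r in \<open>auto simp: inverse_le_1_iff\<close>)
  also have "\<dots> = C * inverse (4 * C) * hfun TYPE('a) \<nu> (r / \<Lambda>)"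
    by (simp only: \<open>inverse \<Lambda> powr \<alpha> = inverse (4 * C)\<close> divide_inverse_commute)
  also have "C * inverse (4 * C) = 1 / 4" using C by simp
  finally have "hfun TYPE('a) \<nu> r \<le> hfun TYPE('a) \<nu> (r / \<Lambda>) / 4" by simp
  moreover have "hfun TYPE('a) \<nu> (r / \<Lambda>) \<le> hfun TYPE('a) \<nu> r'"
    using \<open>\<not> r \<le> \<Lambda> * r'\<close> \<Lambda> r' by (intro hfun_antimono) (auto simp: pos_le_divide_eq mult.commute)
  moreover have "0 < hfun TYPE('a) \<nu> (r / \<Lambda>)" using r \<Lambda> by (intro hfun_pos) simp
  ultimately show False using r'(2) by linarith
qed

subsection \<open>The truncated second moment\<close>

lemma ball_second_moment_less_top:
  assumes "0 < r"
  shows "ball_second_moment TYPE('a) \<nu> r < \<infinity>"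
proof -
  have "indicator {x. norm x < r} x * ennreal (norm x ^ 2) =
      ennreal (indicator {x. x < r} (norm x) * norm x ^ 2)" for x :: 'a
    by (simp add: indicator_def)
  then show ?thesis
    unfolding ball_second_moment_def using assms
    by (simp only:) (rule nn_integral_radial_less_top[OF indicator_less_mult_power2_le]; simp)
qed

lemma Kfun_half_le:
  assumes "0 < r"
  shows "Kfun TYPE('a) \<nu> (r / 2) \<le> 4 * Kfun TYPE('a) \<nu> r"
proof -
  have "enn2real (ball_second_moment TYPE('a) \<nu> (r / 2)) \<le> enn2real (ball_second_moment TYPE('a) \<nu> r)"
    using ball_second_moment_less_top[OF assms] assms
    by (intro enn2real_mono ball_second_moment_mono) auto
  then show ?thesis using assms by (simp add: Kfun_eq power_divide field_simps)
qed

lemma ball_second_moment_scale: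
  assumes r: "0 < r"
  shows "ball_second_moment TYPE('a) \<nu> r = ennreal (r ^ (DIM('a) + 2)) *
    (\<integral>\<^sup>+ x. indicator {x. norm x < 1} x * ennreal (norm x ^ 2) * \<nu> (norm (r *\<^sub>R x)) \<partial>(lborel :: 'a measure))"
proof -
  have "ball_second_moment TYPE('a) \<nu> r = ennreal (r ^ DIM('a)) *
      (\<integral>\<^sup>+ x. indicator {x. norm x < r} (r *\<^sub>R x) * ennreal (norm (r *\<^sub>R x) ^ 2) * \<nu> (norm (r *\<^sub>R x)) \<partial>(lborel :: 'a measure))"
    unfolding ball_second_moment_def by (rule nn_integral_scale) (use r in auto)
  also have "(\<integral>\<^sup>+ x. indicator {x. norm x < r} (r *\<^sub>R x) * ennreal (norm (r *\<^sub>R x) ^ 2) * \<nu> (norm (r *\<^sub>R x)) \<partial>(lborel :: 'a measure))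
     = (\<integral>\<^sup>+ x. ennreal (r^2) * (indicator {x. norm x < 1} x * ennreal (norm x ^ 2) * \<nu> (norm (r *\<^sub>R x))) \<partial>(lborel :: 'a measure))"
    using r by (intro nn_integral_cong) (simp add: indicator_def ennreal_mult' power_mult_distrib mult_ac)
  also have "\<dots> = ennreal (r^2) *
      (\<integral>\<^sup>+ x. indicator {x. norm x < 1} x * ennreal (norm x ^ 2) * \<nu> (norm (r *\<^sub>R x)) \<partial>(lborel :: 'a measure))"
    by (rule nn_integral_cmult) measurable
  also have "ennreal (r ^ DIM('a)) * ennreal (r^2) = ennreal (r ^ (DIM('a) + 2))"
    using r by (simp only: power_add ennreal_mult zero_le_power less_imp_le)
  ultimately show ?thesis by (metis mult.assoc)
qed

lemma Kfun_div_power_antimono: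
  assumes ab: "0 < a" "a \<le> b"
  shows "Kfun TYPE('a) \<nu> b / b ^ DIM('a) \<le> Kfun TYPE('a) \<nu> a / a ^ DIM('a)"
proof -
  define I where "I r = (\<integral>\<^sup>+ x. indicator {x. norm x < 1} x * ennreal (norm x ^ 2) * \<nu> (norm (r *\<^sub>R x)) \<partial>(lborel :: 'a measure))" for r
  have K_eq: "Kfun TYPE('a) \<nu> r / r ^ DIM('a) = enn2real (I r)" if "0 < r" for r
    using that by (simp add: Kfun_eq ball_second_moment_scale I_def enn2real_mult power_add power2_eq_square)
  have "I a < \<infinity>"
    using ball_second_moment_less_top[OF ab(1)] ab(1)
    by (auto simp: ball_second_moment_scale I_def ennreal_mult_less_top)
  moreover have "I b \<le> I a"
    unfolding I_def using ab
    by (intro nn_integral_mono mult_left_mono nu_antimono) (auto intro: mult_right_mono)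
  ultimately show ?thesis using ab by (simp add: K_eq enn2real_mono)
qed

lemma Kfun_div_power_le:
  assumes "0 < R" "R / 2 \<le> r"
  shows "Kfun TYPE('a) \<nu> r / r ^ DIM('a) \<le> 2 ^ (DIM('a) + 2) * (Kfun TYPE('a) \<nu> R / R ^ DIM('a))"
proof -
  have "Kfun TYPE('a) \<nu> r / r ^ DIM('a) \<le> Kfun TYPE('a) \<nu> (R / 2) / (R / 2) ^ DIM('a)"
    using assms by (intro Kfun_div_power_antimono) auto
  also have "\<dots> = 2 ^ DIM('a) * (Kfun TYPE('a) \<nu> (R / 2) / R ^ DIM('a))"
    by (simp add: power_divide)
  also have "\<dots> \<le> 2 ^ DIM('a) * (4 * Kfun TYPE('a) \<nu> R / R ^ DIM('a))"
    using Kfun_half_le[OF assms(1)] assms(1) by (intro mult_left_mono divide_right_mono) auto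
  also have "\<dots> = 2 ^ (DIM('a) + 2) * (Kfun TYPE('a) \<nu> R / R ^ DIM('a))"
    by (simp add: power_add)
  finally show ?thesis .
qed

subsection \<open>The bound on rho\<close>

lemma weighted_rho_le_hinv:
  fixes x :: 'a
  assumes sc: "hfun_scaling TYPE('a) \<nu> \<alpha>h Ch \<theta>h" "0 < \<theta>h" "0 < \<alpha>h" "1 \<le> Ch"
    and g: "weight_scaling g \<alpha>g cg \<theta>g" "\<alpha>g \<le> 1" "\<And>t. 0 < t \<Longrightarrow> 0 < g t"
    and st: "0 < t" "t \<le> s" "ereal (s + t) < inv_h_at TYPE('a) \<nu> \<theta>h" "ereal (s + t) < \<theta>g"
  shows "g s * rho \<nu> s x \<le>
    2 * cg * ((4 * Ch) powr (1 / \<alpha>h)) ^ DIM('a) * g (s + t) * inverse (hinv TYPE('a) \<nu> (1 / (s + t)) ^ DIM('a))"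
proof -
  define \<Lambda> where "\<Lambda> = (4 * Ch) powr (1 / \<alpha>h)"
  define r where "r = hinv TYPE('a) \<nu> (1 / (s + t))"
  define r' where "r' = hinv TYPE('a) \<nu> (1 / s)"
  have r: "0 < r" "hfun TYPE('a) \<nu> r = 1 / (s + t)" "ereal r < \<theta>h"
    using st sc hinv_less_theta unfolding r_def by (auto simp: hinv_pos hfun_hinv)
  have r': "0 < r'" "hfun TYPE('a) \<nu> r' = 1 / s"
    using st unfolding r'_def by (auto simp: hinv_pos hfun_hinv)
  have "hfun TYPE('a) \<nu> r' \<le> 2 * hfun TYPE('a) \<nu> r"
    unfolding r(2) r'(2) using st by (simp add: field_simps)
  then have "r \<le> \<Lambda> * r'"
    unfolding \<Lambda>_def using r r'(1) sc by (intro hfun_scaling_radius_le) auto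
  then have "r ^ DIM('a) \<le> \<Lambda> ^ DIM('a) * r' ^ DIM('a)"
    using r(1) by (simp add: power_mono flip: power_mult_distrib)
  then have hinv_bound: "inverse (r' ^ DIM('a)) \<le> \<Lambda> ^ DIM('a) * inverse (r ^ DIM('a))"
    using r(1) r'(1) by (simp add: field_simps)
  have "s * g s \<le> (s + t) * (cg * g (s + t))"
    using st g weight_scaling_mult_le[OF g(1,2), of s "s + t"] by (simp add: less_imp_le mult_ac)
  moreover have "0 < s * g s" using st g(3)[of s] by simp
  ultimately have weight_nonneg: "0 \<le> cg * g (s + t)"
    using st by (metis add_pos_pos less_le_trans zero_less_mult_iff less_imp_le not_less)
  then have "(s + t) * (cg * g (s + t)) \<le> (2 * s) * (cg * g (s + t))"
    using st by (intro mult_right_mono) auto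
  with \<open>s * g s \<le> (s + t) * (cg * g (s + t))\<close> have "s * g s \<le> s * (2 * cg * g (s + t))"
    by (simp add: mult_ac)
  then have weight_bound: "g s \<le> 2 * cg * g (s + t)"
    using st by (simp add: mult_le_cancel_left_pos)
  have "g s * rho \<nu> s x \<le> g s * inverse (r' ^ DIM('a))"
    using g(3)[of s] st unfolding r'_def rho_def by (intro mult_left_mono) auto
  also have "\<dots> \<le> (2 * cg * g (s + t)) * (\<Lambda> ^ DIM('a) * inverse (r ^ DIM('a)))"
    using weight_bound hinv_bound weight_nonneg g(3)[of s] st r'(1) by (intro mult_mono) auto
  finally show ?thesis unfolding \<Lambda>_def r_def by (simp add: mult_ac)
qed

lemma weighted_rho_le_Kfun:
  fixes z w :: 'a
  assumes g: "weight_scaling g \<alpha> c \<theta>" "\<alpha> \<le> 1" "0 < g u"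
    and u: "0 < u" "u \<le> T" "ereal T < \<theta>"
    and w: "w \<noteq> 0" "norm w / 2 \<le> norm z"
  shows "g u * rho \<nu> u z \<le> c * 2 ^ (DIM('a) + 2) * g T * (T * Kfun TYPE('a) \<nu> (norm w) / norm w ^ DIM('a))"
proof -
  have z: "z \<noteq> 0" using w by auto
  have "rho \<nu> u z \<le> u * Kfun TYPE('a) \<nu> (norm z) / norm z ^ DIM('a)"
    using z by (simp add: rho_def)
  then have "g u * rho \<nu> u z \<le> g u * (u * Kfun TYPE('a) \<nu> (norm z) / norm z ^ DIM('a))"
    using g(3) by (intro mult_left_mono) auto
  also have "\<dots> = (u * g u) * (Kfun TYPE('a) \<nu> (norm z) / norm z ^ DIM('a))" by simp
  also have "\<dots> \<le> (c * T * g T) * (2 ^ (DIM('a) + 2) * (Kfun TYPE('a) \<nu> (norm w) / norm w ^ DIM('a)))"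
  proof (rule mult_mono)
    show "u * g u \<le> c * T * g T" using g u by (intro weight_scaling_mult_le) auto
    moreover have "0 < u * g u" using g u by simp
    ultimately show "0 \<le> c * T * g T" by linarith
  qed (use w Kfun_div_power_le in \<open>auto simp: Kfun_nonneg\<close>)
  finally show ?thesis by (simp add: mult_ac)
qed

lemma weighted_rho_min_le:
  fixes x y :: 'a
  assumes sc: "hfun_scaling TYPE('a) \<nu> \<alpha>h Ch \<theta>h" "0 < \<theta>h" "0 < \<alpha>h" "1 \<le> Ch"
    and g: "weight_scaling g \<alpha>g cg \<theta>g" "\<alpha>g \<le> 1" "1 \<le> cg" "\<And>t. 0 < t \<Longrightarrow> 0 < g t"
    and st: "0 < s" "0 < t" "ereal (s + t) < inv_h_at TYPE('a) \<nu> \<theta>h" "ereal (s + t) < \<theta>g"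
  shows "min (g s * rho \<nu> s x) (g t * rho \<nu> t y) \<le> rho_min_const TYPE('a) \<alpha>h Ch cg * g (s + t) * rho \<nu> (s + t) (x + y)"
proof -
  define C where "C = rho_min_const TYPE('a) \<alpha>h Ch cg"
  define G where "G = g (s + t)"
  define A where "A = inverse (hinv TYPE('a) \<nu> (1 / (s + t)) ^ DIM('a))"
  define B where "B = (s + t) * Kfun TYPE('a) \<nu> (norm (x + y)) / norm (x + y) ^ DIM('a)"
  let ?m = "min (g s * rho \<nu> s x) (g t * rho \<nu> t y)"
  have C_ge: "2 * cg * ((4 * Ch) powr (1 / \<alpha>h)) ^ DIM('a) \<le> C" "cg * 2 ^ (DIM('a) + 2) \<le> C"
    unfolding C_def rho_min_const_def using g(3)
    by (simp_all add: mult.assoc mult_left_mono)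
  have G: "0 < G" unfolding G_def using g(4) st by simp
  have A: "0 \<le> A" unfolding A_def using hinv_pos[of "1 / (s + t)"] st by simp
  have "?m \<le> 2 * cg * ((4 * Ch) powr (1 / \<alpha>h)) ^ DIM('a) * G * A"
  proof (cases "t \<le> s")
    case True
    then show ?thesis unfolding G_def A_def
      using weighted_rho_le_hinv[OF sc g(1,2,4), of t s x] st by (simp add: min.coboundedI1)
  next
    case False
    then show ?thesis unfolding G_def A_def
      using weighted_rho_le_hinv[OF sc g(1,2,4), of s t y] st by (simp add: add.commute min.coboundedI2)
  qed
  also have "\<dots> \<le> C * G * A"
    using C_ge G A by (intro mult_right_mono) auto
  finally have m_A: "?m \<le> C * G * A" .
  show ?thesis
  proof (cases "x + y = 0")
    case True
    then show ?thesis using m_A by (simp add: rho_def A_def C_def G_def)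
  next
    case False
    have "?m \<le> cg * 2 ^ (DIM('a) + 2) * G * B"
    proof -
      consider "norm (x + y) / 2 \<le> norm x" | "norm (x + y) / 2 \<le> norm y"
        using norm_triangle_ineq[of x y] by linarith
      then show ?thesis
      proof cases
        case 1
        then show ?thesis unfolding G_def B_def
          using weighted_rho_le_Kfun[OF g(1,2) g(4)[of s], of "s + t" "x + y" x] st False
          by (simp add: min.coboundedI1)
      next
        case 2
        then show ?thesis unfolding G_def B_def
          using weighted_rho_le_Kfun[OF g(1,2) g(4)[of t], of "s + t" "x + y" y] st False
          by (simp add: min.coboundedI2)
      qed
    qed
    also have "\<dots> \<le> C * G * B"
      unfolding B_def using C_ge G st by (intro mult_right_mono) (auto simp: Kfun_nonneg)
    finally have "?m \<le> C * G * B" .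
    with m_A have "?m \<le> C * G * min A B" by (cases "A \<le> B") (simp_all add: min.absorb1 min.absorb2)
    then show ?thesis using False by (simp add: rho_def A_def B_def C_def G_def)
  qed
qed

lemma rho_min_le:
  fixes x y :: 'a
  assumes sc: "hfun_scaling TYPE('a) \<nu> \<alpha>h Ch \<theta>h" "0 < \<theta>h" "0 < \<alpha>h" "1 \<le> Ch"
    and st: "0 < s" "0 < t" "ereal (s + t) < inv_h_at TYPE('a) \<nu> \<theta>h"
  shows "min (rho \<nu> s x) (rho \<nu> t y) \<le> rho_min_const TYPE('a) \<alpha>h Ch 1 * rho \<nu> (s + t) (x + y)"
  using weighted_rho_min_le[OF sc, of "\<lambda>_. 1" 0 1 \<infinity>] st by (simp add: weight_scaling_def)

end

theorem mainTheorem15: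
  shows
  "(\<forall>\<alpha>h Ch \<alpha>g cg :: real. 0 < \<alpha>h \<and> \<alpha>h \<le> 2 \<and> 1 \<le> Ch \<and> \<alpha>g \<le> 1 \<and> 1 \<le> cg \<longrightarrow>
     (\<exists>c :: real. \<forall>(\<nu> :: real \<Rightarrow> ennreal) (\<theta>h :: ereal) (g :: real \<Rightarrow> real) (\<theta>g :: ereal).
        admissible_nu TYPE('a::euclidean_space) \<nu> \<and> 0 < \<theta>h \<and>
        (\<forall>l r. 0 < l \<and> l \<le> 1 \<and> 0 < r \<and> ereal r < \<theta>h \<longrightarrow>
            hfun TYPE('a) \<nu> r \<le> Ch * l powr \<alpha>h * hfun TYPE('a) \<nu> (l * r)) \<and>
        (\<forall>t. 0 < t \<longrightarrow> 0 < g t) \<and>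
        (\<forall>a b. 0 < a \<and> a \<le> b \<longrightarrow> g b \<le> g a) \<and>
        0 < \<theta>g \<and>
        (\<forall>l t. 0 < l \<and> l \<le> 1 \<and> 0 < t \<and> ereal t < \<theta>g \<longrightarrow>
            l powr \<alpha>g * g (l * t) \<le> cg * g t)
        \<longrightarrow>
        (\<forall>s t (x :: 'a) y. 0 < s \<and> 0 < t \<and>
            ereal (s + t) < min (inv_h_at TYPE('a) \<nu> \<theta>h) \<theta>g \<longrightarrow>
            min (g s * rho \<nu> s x) (g t * rho \<nu> t y) \<le> c * g (s + t) * rho \<nu> (s + t) (x + y))))
   \<and>
   (\<forall>\<alpha>h Ch :: real. 0 < \<alpha>h \<and> \<alpha>h \<le> 2 \<and> 1 \<le> Ch \<longrightarrow>
     (\<exists>c :: real. \<forall>(\<nu> :: real \<Rightarrow> ennreal) (\<theta>h :: ereal).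
        admissible_nu TYPE('a) \<nu> \<and> 0 < \<theta>h \<and>
        (\<forall>l r. 0 < l \<and> l \<le> 1 \<and> 0 < r \<and> ereal r < \<theta>h \<longrightarrow>
            hfun TYPE('a) \<nu> r \<le> Ch * l powr \<alpha>h * hfun TYPE('a) \<nu> (l * r))
        \<longrightarrow>
        (\<forall>s t (x :: 'a) y. 0 < s \<and> 0 < t \<and> ereal (s + t) < inv_h_at TYPE('a) \<nu> \<theta>h \<longrightarrow>
            min (rho \<nu> s x) (rho \<nu> t y) \<le> c * rho \<nu> (s + t) (x + y))))"
  apply (intro conjI allI impI)
  subgoal for \<alpha>h Ch \<alpha>g cg
    by (intro exI[of _ "rho_min_const TYPE('a) \<alpha>h Ch cg"] allI impI)
      (auto intro!: weighted_rho_min_le simp: hfun_scaling_def weight_scaling_def)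
  subgoal for \<alpha>h Ch
    by (intro exI[of _ "rho_min_const TYPE('a) \<alpha>h Ch 1"] allI impI)
      (auto intro!: rho_min_le simp: hfun_scaling_def)
  done

end
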